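(* If two bounding triples in $BT_n$ are conjugate under the action of $GL_\infty(\mathbb{F}_q)$, then they are conjugate under the action of the subgroup $GL_n(\mathbb{F}_q)$.
   Context: $\mathbb{F}_q^\infty$ has basis $e_1,e_2,\dots$; $\mathbb{F}_q^n=\mathrm{span}\{e_1,\dots,e_n\}$. $GL_\infty(\mathbb{F}_q)=\varinjlim GL_n(\mathbb{F}_q)$ under $g\mapsto\operatorname{diag}(g,\mathrm{Id})$, i.e. invertible $\mathbb{Z}_{>0}\times\mathbb{Z}_{>0}$ matrices differing from the identity in finitely many entries; $g^T$ is the transpose. A subspace is smooth if it contains $e_i$ for all sufficiently large $i$. A bounding triple is $(W,g,V)$ with $W,V$ smooth, $g\in GL_\infty(\mathbb{F}_q)$, $g$ acting as identity on $V$ and $g^T$ acting as identity on $W$. $BT_n$ is the set of bounding triples with $e_{n+1},e_{n+2},\dots\in V\cap W$. $GL_\infty(\mathbb{F}_q)$ acts by $x\cdot(W,g,V)=(x^{-T}W,xgx^{-1},xV)$, $x^{-T}=(x^{-1})^T$. *)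

theory Defs
  imports Main
begin

text \<open>Basis vectors are indexed from 0 (e_0, e_1, ...), i.e. the paper's e_i is
  our unit_vec (i - 1).\<close>

definition Finf :: "(nat \<Rightarrow> 'a::field) set" where
  "Finf = {v. finite {i. v i \<noteq> 0}}"

definition unit_vec :: "nat \<Rightarrow> nat \<Rightarrow> 'a::field" where
  "unit_vec i = (\<lambda>j. if j = i then 1 else 0)"

definition idm :: "nat \<Rightarrow> nat \<Rightarrow> 'a::field" where
  "idm = (\<lambda>i j. if i = j then 1 else 0)"

definition finitary :: "(nat \<Rightarrow> nat \<Rightarrow> 'a::field) \<Rightarrow> bool" where
  "finitary g \<longleftrightarrow> finite {(i, j). g i j \<noteq> idm i j}"

definition mmul :: "(nat \<Rightarrow> nat \<Rightarrow> 'a::field) \<Rightarrow> (nat \<Rightarrow> nat \<Rightarrow> 'a) \<Rightarrow> nat \<Rightarrow> nat \<Rightarrow> 'a" where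
  "mmul g h = (\<lambda>i j. \<Sum>k\<in>{k. g i k \<noteq> 0}. g i k * h k j)"

definition mtrans :: "(nat \<Rightarrow> nat \<Rightarrow> 'a) \<Rightarrow> nat \<Rightarrow> nat \<Rightarrow> 'a" where
  "mtrans g = (\<lambda>i j. g j i)"

definition mvec :: "(nat \<Rightarrow> nat \<Rightarrow> 'a::field) \<Rightarrow> (nat \<Rightarrow> 'a) \<Rightarrow> nat \<Rightarrow> 'a" where
  "mvec g v = (\<lambda>i. \<Sum>j\<in>{j. v j \<noteq> 0}. g i j * v j)"

definition GLinf :: "(nat \<Rightarrow> nat \<Rightarrow> 'a::field) set" where
  "GLinf = {g. finitary g \<and> (\<exists>h. finitary h \<and> mmul g h = idm \<and> mmul h g = idm)}"

definition minv :: "(nat \<Rightarrow> nat \<Rightarrow> 'a::field) \<Rightarrow> nat \<Rightarrow> nat \<Rightarrow> 'a" where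
  "minv x = (THE y. finitary y \<and> mmul x y = idm \<and> mmul y x = idm)"

definition GLn :: "nat \<Rightarrow> (nat \<Rightarrow> nat \<Rightarrow> 'a::field) set" where
  "GLn n = {x \<in> GLinf. \<forall>i j. (n \<le> i \<or> n \<le> j) \<longrightarrow> x i j = idm i j}"

definition is_subspace :: "(nat \<Rightarrow> 'a::field) set \<Rightarrow> bool" where
  "is_subspace W \<longleftrightarrow> W \<subseteq> Finf \<and> (\<lambda>i. 0) \<in> W \<and>
     (\<forall>v\<in>W. \<forall>w\<in>W. (\<lambda>i. v i + w i) \<in> W) \<and> (\<forall>c. \<forall>v\<in>W. (\<lambda>i. c * v i) \<in> W)"

definition smooth :: "(nat \<Rightarrow> 'a::field) set \<Rightarrow> bool" where
  "smooth W \<longleftrightarrow> is_subspace W \<and> (\<exists>N. \<forall>i\<ge>N. unit_vec i \<in> W)"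

type_synonym 'a triple = "(nat \<Rightarrow> 'a) set \<times> (nat \<Rightarrow> nat \<Rightarrow> 'a) \<times> (nat \<Rightarrow> 'a) set"

definition bounding_triple :: "'a::field triple \<Rightarrow> bool" where
  "bounding_triple T \<longleftrightarrow> (case T of (W, g, V) \<Rightarrow>
     smooth W \<and> smooth V \<and> g \<in> GLinf \<and>
     (\<forall>v\<in>V. mvec g v = v) \<and> (\<forall>w\<in>W. mvec (mtrans g) w = w))"

text \<open>BT_n (0-based): e_i in V and W for all i >= n.\<close>
definition BT :: "nat \<Rightarrow> 'a::field triple set" where
  "BT n = {T. bounding_triple T \<and>
     (case T of (W, g, V) \<Rightarrow> \<forall>i\<ge>n. unit_vec i \<in> V \<and> unit_vec i \<in> W)}"

definition act :: "(nat \<Rightarrow> nat \<Rightarrow> 'a::field) \<Rightarrow> 'a triple \<Rightarrow> 'a triple" where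
  "act x T = (case T of (W, g, V) \<Rightarrow>
     (mvec (mtrans (minv x)) ` W, mmul (mmul x g) (minv x), mvec x ` V))"

end

theory Submission
  imports Defs
begin

text \<open>Let \<open>x \<in> GL\<^sub>\<infinity>\<close> conjugate \<open>T \<in> BT\<^sub>n\<close> to \<open>T' \<in> BT\<^sub>n\<close>, where \<open>x = diag(x\<^sub>0, Id)\<close> with
  \<open>x\<^sub>0\<close> of size \<open>t + 1 > n\<close>. Since \<open>e\<^sub>t\<close> lies in \<open>V\<close> and \<open>W\<close>, the matrix \<open>g\<close> fixes row and
  column \<open>t\<close>, so the stabiliser of \<open>(W, g, V)\<close> contains the elementary matrices \<open>Id + u e\<^sub>t\<^sup>T\<close>
  (\<open>u \<in> V\<close>, \<open>1 + u\<^sub>t \<noteq> 0\<close>) and \<open>Id + e\<^sub>t c\<^sup>T\<close> (\<open>c \<in> W\<close>, \<open>c\<^sub>t = 0\<close>). Replacing \<open>x\<close> by \<open>x s\<close> for such an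
  \<open>s\<close> stabilising \<open>T\<close> makes the pivot \<open>x\<^sub>t\<^sub>t\<close> equal to \<open>1\<close>; then \<open>s' x s''\<close>, with \<open>s'\<close> stabilising
  \<open>T'\<close> and \<open>s''\<close> stabilising \<open>T\<close>, clears row and column \<open>t\<close>. The new conjugator has a block
  of size \<open>t\<close>; descending to size \<open>n\<close> yields an element of \<open>GL\<^sub>n\<close>. The field need not be finite.\<close>

section \<open>Finitary matrices\<close>

definition id_beyond :: "nat \<Rightarrow> (nat \<Rightarrow> nat \<Rightarrow> 'a::field) \<Rightarrow> bool" where
  "id_beyond N A \<longleftrightarrow> (\<forall>i j. (N \<le> i \<or> N \<le> j) \<longrightarrow> A i j = idm i j)"

lemma GLn_eq: "GLn n = {x \<in> GLinf. id_beyond n x}"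
  unfolding GLn_def id_beyond_def ..

lemma id_beyond_mono: "id_beyond N A \<Longrightarrow> N \<le> M \<Longrightarrow> id_beyond M A"
  unfolding id_beyond_def by auto

lemma id_beyond_imp_finitary: "id_beyond N A \<Longrightarrow> finitary A"
proof -
  assume "id_beyond N A"
  then have "{(i, j). A i j \<noteq> idm i j} \<subseteq> {..<N} \<times> {..<N}"
    unfolding id_beyond_def by (auto simp flip: not_le)
  then show ?thesis unfolding finitary_def by (rule finite_subset) auto
qed

lemma finitary_imp_id_beyond: "finitary A \<Longrightarrow> \<exists>N. id_beyond N A"
proof -
  assume "finitary A"
  let ?D = "{(i, j). A i j \<noteq> idm i j}"
  have "finite (fst ` ?D \<union> snd ` ?D)" using \<open>finitary A\<close> unfolding finitary_def by auto
  then obtain N where N: "\<And>k. k \<in> fst ` ?D \<union> snd ` ?D \<Longrightarrow> k < N"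
    by (meson finite_nat_set_iff_bounded)
  have "id_beyond N A" unfolding id_beyond_def
  proof (intro allI impI)
    fix i j assume "N \<le> i \<or> N \<le> j"
    show "A i j = idm i j"
    proof (rule ccontr)
      assume "A i j \<noteq> idm i j"
      then have "i < N" "j < N" using N[of i] N[of j] by force+
      with \<open>N \<le> i \<or> N \<le> j\<close> show False by simp
    qed
  qed
  then show ?thesis by blast
qed

lemma finite_row_support: "finitary A \<Longrightarrow> finite {k. A i k \<noteq> 0}"
proof -
  assume "finitary A"
  then obtain N where "id_beyond N A" using finitary_imp_id_beyond by blast
  then have "{k. A i k \<noteq> 0} \<subseteq> {..<N} \<union> {i}"
    unfolding id_beyond_def idm_def by (auto split: if_splits) (metis not_le)
  then show ?thesis by (rule finite_subset) auto
qed

lemma finite_col_support: "finitary A \<Longrightarrow> finite {k. A k j \<noteq> 0}"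
proof -
  assume "finitary A"
  then obtain N where "id_beyond N A" using finitary_imp_id_beyond by blast
  then have "{k. A k j \<noteq> 0} \<subseteq> {..<N} \<union> {j}"
    unfolding id_beyond_def idm_def by (auto split: if_splits) (metis not_le)
  then show ?thesis by (rule finite_subset) auto
qed

lemma Finf_imp_vanishes_beyond: "u \<in> Finf \<Longrightarrow> \<exists>N. \<forall>i\<ge>N. u i = 0"
proof -
  assume "u \<in> Finf"
  then have "finite {i. u i \<noteq> 0}" unfolding Finf_def by simp
  then obtain N where "\<And>i. i \<in> {i. u i \<noteq> 0} \<Longrightarrow> i < N"
    by (meson finite_nat_set_iff_bounded)
  then have "\<forall>i\<ge>N. u i = 0" by (meson le_less_trans less_irrefl mem_Collect_eq)
  then show ?thesis ..
qed

lemma unit_vec_Finf: "unit_vec t \<in> Finf"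
proof -
  have "{k. (unit_vec t k::'a) \<noteq> 0} = {t}" by (auto simp: unit_vec_def)
  then show ?thesis unfolding Finf_def by simp
qed

lemma sum_eq_over_superset:
  fixes f :: "nat \<Rightarrow> 'a::field"
  assumes "finite A" "finite S" "{k\<in>A. f k \<noteq> 0} \<subseteq> S" "\<And>k. k \<notin> A \<Longrightarrow> f k = 0"
  shows "sum f A = sum f S"
proof -
  have "sum f A = sum f (A \<union> S)"
    by (rule sum.mono_neutral_left) (use assms in auto)
  also have "sum f S = sum f (A \<union> S)"
    by (rule sum.mono_neutral_left) (use assms in auto)
  finally show ?thesis by simp
qed

lemma mmul_eq_sum:
  assumes "finite {k. A i k \<noteq> 0}" "finite S" "{k. A i k \<noteq> 0 \<and> B k j \<noteq> 0} \<subseteq> S"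
  shows "mmul A B i j = (\<Sum>k\<in>S. A i k * B k j)"
  unfolding mmul_def by (rule sum_eq_over_superset) (use assms in auto)

lemma mvec_eq_sum:
  assumes "finite {k. v k \<noteq> 0}" "finite S" "{k. A i k \<noteq> 0 \<and> v k \<noteq> 0} \<subseteq> S"
  shows "mvec A v i = (\<Sum>k\<in>S. A i k * v k)"
  unfolding mvec_def by (rule sum_eq_over_superset) (use assms in auto)

lemma row_support_mmul: "{k. mmul A B i k \<noteq> 0} \<subseteq> (\<Union>l\<in>{l. A i l \<noteq> 0}. {k. B l k \<noteq> 0})"
proof
  fix k assume "k \<in> {k. mmul A B i k \<noteq> 0}"
  then have "(\<Sum>l\<in>{l. A i l \<noteq> 0}. A i l * B l k) \<noteq> 0" unfolding mmul_def by simp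
  then obtain l where "l \<in> {l. A i l \<noteq> 0}" "A i l * B l k \<noteq> 0"
    by (rule sum.not_neutral_contains_not_neutral)
  then show "k \<in> (\<Union>l\<in>{l. A i l \<noteq> 0}. {k. B l k \<noteq> 0})" by auto
qed

lemma mmul_assoc_row_finite:
  assumes fa: "\<And>i. finite {k. A i k \<noteq> 0}" and fb: "\<And>i. finite {k. B i k \<noteq> 0}"
  shows "mmul (mmul A B) C = mmul A (mmul B C)"
proof (intro ext)
  fix i j
  define R where "R = {l. A i l \<noteq> 0}"
  define S where "S = (\<Union>l\<in>R. {k. B l k \<noteq> 0})"
  have fR: "finite R" using fa R_def by auto
  have fS: "finite S" unfolding S_def using fR fb by auto
  have sub: "{k. mmul A B i k \<noteq> 0} \<subseteq> S" unfolding S_def R_def by (rule row_support_mmul)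
  have "mmul (mmul A B) C i j = (\<Sum>k\<in>S. (\<Sum>l\<in>R. A i l * B l k) * C k j)"
    unfolding R_def by (subst mmul_eq_sum[of _ _ S]) (use sub fS finite_subset in \<open>auto simp: mmul_def\<close>)
  also have "\<dots> = (\<Sum>k\<in>S. \<Sum>l\<in>R. A i l * (B l k * C k j))"
    by (simp only: sum_distrib_right mult.assoc)
  also have "\<dots> = (\<Sum>l\<in>R. \<Sum>k\<in>S. A i l * (B l k * C k j))"
    by (rule sum.swap)
  also have "\<dots> = (\<Sum>l\<in>R. A i l * mmul B C l j)"
  proof (rule sum.cong[OF refl])
    fix l assume "l \<in> R"
    then have "{k. B l k \<noteq> 0} \<subseteq> S" unfolding S_def by auto
    then have "mmul B C l j = (\<Sum>k\<in>S. B l k * C k j)"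
      by (intro mmul_eq_sum) (use fb fS in auto)
    then show "(\<Sum>k\<in>S. A i l * (B l k * C k j)) = A i l * mmul B C l j"
      by (simp add: sum_distrib_left)
  qed
  also have "\<dots> = mmul A (mmul B C) i j" unfolding mmul_def R_def by simp
  finally show "mmul (mmul A B) C i j = mmul A (mmul B C) i j" .
qed

lemma mmul_assoc:
  "finitary A \<Longrightarrow> finitary B \<Longrightarrow> mmul (mmul A B) C = mmul A (mmul B C)"
  by (rule mmul_assoc_row_finite) (auto intro: finite_row_support)

lemma mmul_idm_right_apply:
  assumes "finite {k. A i k \<noteq> 0}"
  shows "mmul A idm i j = A i j"
proof -
  have "mmul A idm i j = (\<Sum>k\<in>{k. A i k \<noteq> 0}. if k = j then A i k else 0)"
    unfolding mmul_def by (rule sum.cong) (auto simp: idm_def)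
  also have "\<dots> = A i j"
    using assms by (subst sum.delta) auto
  finally show ?thesis .
qed

lemma mmul_idm_right [simp]: "finitary A \<Longrightarrow> mmul A idm = A"
  by (intro ext mmul_idm_right_apply finite_row_support)

lemma mmul_idm_left [simp]: "mmul idm A = A"
proof (intro ext)
  fix i j
  have "{k. (idm::nat\<Rightarrow>nat\<Rightarrow>'a) i k \<noteq> 0} = {i}" by (auto simp: idm_def)
  then show "mmul idm A i j = A i j" unfolding mmul_def by (simp add: idm_def)
qed

lemma id_beyond_mmul:
  assumes "id_beyond N A" "id_beyond N B"
  shows "id_beyond N (mmul A B)"
  unfolding id_beyond_def
proof (intro allI impI)
  fix i j assume h: "N \<le> i \<or> N \<le> j"
  show "mmul A B i j = idm i j"
  proof (cases "N \<le> i")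
    case True
    have "{k. A i k \<noteq> 0} = {i}" using assms(1) True unfolding id_beyond_def idm_def
      by (auto split: if_splits)
    then have "mmul A B i j = A i i * B i j" unfolding mmul_def by simp
    then show ?thesis using assms True unfolding id_beyond_def by (simp add: idm_def)
  next
    case False
    then have j: "N \<le> j" using h by auto
    have "mmul A B i j = mmul A idm i j"
      unfolding mmul_def using assms(2) j unfolding id_beyond_def by simp
    also have "\<dots> = A i j"
      by (rule mmul_idm_right_apply[OF finite_row_support[OF id_beyond_imp_finitary[OF assms(1)]]])
    finally show ?thesis using assms(1) j unfolding id_beyond_def by simp
  qed
qed

lemma finitary_mmul: "finitary A \<Longrightarrow> finitary B \<Longrightarrow> finitary (mmul A B)"
  by (metis finitary_imp_id_beyond id_beyond_imp_finitary id_beyond_mmul id_beyond_mono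
      max.cobounded1 max.cobounded2)

lemma id_beyond_mtrans: "id_beyond N A \<Longrightarrow> id_beyond N (mtrans A)"
  unfolding id_beyond_def mtrans_def idm_def by auto

lemma finitary_mtrans: "finitary A \<Longrightarrow> finitary (mtrans A)"
  using finitary_imp_id_beyond id_beyond_mtrans id_beyond_imp_finitary by metis

lemma mtrans_idm [simp]: "mtrans idm = idm"
  unfolding mtrans_def idm_def by (intro ext) auto

lemma mtrans_mmul:
  assumes "finitary A" "finitary B"
  shows "mtrans (mmul A B) = mmul (mtrans B) (mtrans A)"
proof (intro ext)
  fix i j
  have "mmul (mtrans B) (mtrans A) i j = (\<Sum>k\<in>{k. A j k \<noteq> 0}. B k i * A j k)"
    unfolding mtrans_def
    by (rule mmul_eq_sum) (use finite_col_support[OF assms(2)] finite_row_support[OF assms(1)] in auto)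
  then show "mtrans (mmul A B) i j = mmul (mtrans B) (mtrans A) i j"
    unfolding mtrans_def mmul_def by (simp add: mult.commute)
qed

lemma mvec_id_beyond:
  assumes "id_beyond N B" "finite {k. v k \<noteq> 0}" "N \<le> i"
  shows "mvec B v i = v i"
proof -
  have "mvec B v i = (\<Sum>j\<in>{k. v k \<noteq> 0}. if j = i then v j else 0)"
    unfolding mvec_def by (rule sum.cong) (use assms in \<open>auto simp: id_beyond_def idm_def\<close>)
  also have "\<dots> = v i" using assms(2) by (subst sum.delta) auto
  finally show ?thesis .
qed

lemma finite_support_mvec:
  assumes "finitary B" "finite {k. v k \<noteq> 0}"
  shows "finite {k. mvec B v k \<noteq> 0}"
proof -
  obtain N where N: "id_beyond N B" using finitary_imp_id_beyond assms by blast
  have "{k. mvec B v k \<noteq> 0} \<subseteq> {k. v k \<noteq> 0} \<union> {..<N}"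
    using mvec_id_beyond[OF N assms(2)] by (auto simp flip: not_le)
  then show ?thesis by (rule finite_subset) (use assms in auto)
qed

lemma mvec_idm: "v \<in> Finf \<Longrightarrow> mvec idm v = v"
proof (intro ext)
  fix i assume "v \<in> Finf"
  then show "mvec idm v i = v i"
    using mvec_id_beyond[of 0 idm v i] unfolding Finf_def id_beyond_def by simp
qed

lemma mvec_unit_vec: "mvec A (unit_vec t) i = A i t"
proof -
  have "{k. (unit_vec t k::'a) \<noteq> 0} = {t}" by (auto simp: unit_vec_def)
  then show ?thesis unfolding mvec_def by (simp add: unit_vec_def)
qed

lemma mvec_mmul:
  assumes "finitary A" "finitary B" "v \<in> Finf"
  shows "mvec (mmul A B) v = mvec A (mvec B v)"
proof (intro ext)
  fix i
  define J where "J = {k. v k \<noteq> 0}"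
  define K where "K = {k. A i k \<noteq> 0}"
  have fJ: "finite J" using assms(3) unfolding Finf_def J_def by simp
  have fK: "finite K" using finite_row_support[OF assms(1)] K_def by simp
  have "mvec (mmul A B) v i = (\<Sum>j\<in>J. \<Sum>k\<in>K. A i k * (B k j * v j))"
    unfolding mvec_def mmul_def J_def K_def by (simp only: sum_distrib_right mult.assoc)
  also have "\<dots> = (\<Sum>k\<in>K. \<Sum>j\<in>J. A i k * (B k j * v j))"
    by (rule sum.swap)
  also have "\<dots> = (\<Sum>k\<in>K. A i k * mvec B v k)"
    unfolding mvec_def J_def by (simp only: sum_distrib_left)
  also have "\<dots> = mvec A (mvec B v) i"
    by (rule mvec_eq_sum[symmetric]) (use finite_support_mvec[OF assms(2)] fJ fK K_def J_def in auto)
  finally show "mvec (mmul A B) v i = mvec A (mvec B v) i" .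
qed

lemma mvec_add_scaled:
  assumes "v \<in> Finf" "w \<in> Finf"
  shows "mvec A (\<lambda>i. v i + c * w i) i = mvec A v i + c * mvec A w i"
proof -
  let ?S = "{k. v k \<noteq> 0} \<union> {k. w k \<noteq> 0}"
  have fv: "finite {k. v k \<noteq> 0}" and fw: "finite {k. w k \<noteq> 0}"
    using assms unfolding Finf_def by auto
  have fS: "finite ?S" using fv fw by auto
  have "mvec A (\<lambda>i. v i + c * w i) i = (\<Sum>k\<in>?S. A i k * (v k + c * w k))"
    by (rule mvec_eq_sum) (auto intro: finite_subset[OF _ fS])
  also have "\<dots> = (\<Sum>k\<in>?S. A i k * v k) + c * (\<Sum>k\<in>?S. A i k * w k)"
    by (simp add: sum.distrib sum_distrib_left algebra_simps)
  also have "\<dots> = mvec A v i + c * mvec A w i"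
    using mvec_eq_sum[OF fv fS, of A i] mvec_eq_sum[OF fw fS, of A i] by fastforce
  finally show ?thesis .
qed

lemma mvec_scale:
  assumes "w \<in> Finf"
  shows "mvec A (\<lambda>i. c * w i) i = c * mvec A w i"
proof -
  have "mvec A (\<lambda>i. 0) i = 0" by (simp add: mvec_def)
  then show ?thesis using mvec_add_scaled[of "\<lambda>i. 0" w A c i] assms by (simp add: Finf_def)
qed

section \<open>Inverses and the action on triples\<close>

lemma mmul_inverse_unique:
  assumes "finitary x" "finitary h1" "finitary h2" "mmul x h1 = idm" "mmul h2 x = idm"
  shows "h1 = h2"
proof -
  have "h2 = mmul h2 (mmul x h1)" using assms by simp
  also have "\<dots> = mmul (mmul h2 x) h1" by (rule mmul_assoc[OF assms(3,1), symmetric])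
  also have "\<dots> = h1" using assms by simp
  finally show ?thesis by simp
qed

lemma GLinf_finitary: "x \<in> GLinf \<Longrightarrow> finitary x"
  unfolding GLinf_def by blast

lemma GLinfI: "finitary x \<Longrightarrow> finitary h \<Longrightarrow> mmul x h = idm \<Longrightarrow> mmul h x = idm \<Longrightarrow> x \<in> GLinf"
  unfolding GLinf_def by blast

lemma minv_GLinf:
  assumes "x \<in> GLinf"
  shows "finitary (minv x) \<and> mmul x (minv x) = idm \<and> mmul (minv x) x = idm"
proof -
  from assms obtain h where "finitary h" "mmul x h = idm" "mmul h x = idm" and "finitary x"
    unfolding GLinf_def by blast
  then have "\<exists>!y. finitary y \<and> mmul x y = idm \<and> mmul y x = idm"
    using mmul_inverse_unique by blast
  then show ?thesis unfolding minv_def by (rule theI')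
qed

lemma minv_eq:
  assumes "finitary x" "finitary h" "mmul x h = idm" "mmul h x = idm"
  shows "minv x = h"
  using assms minv_GLinf[OF GLinfI[OF assms]] mmul_inverse_unique by metis

lemma
  assumes x: "x \<in> GLinf" and y: "y \<in> GLinf"
  shows GLinf_mmul: "mmul y x \<in> GLinf"
    and minv_mmul: "minv (mmul y x) = mmul (minv x) (minv y)"
proof -
  have fin: "finitary x" "finitary y" "finitary (minv x)" "finitary (minv y)"
    using x y minv_GLinf GLinf_finitary by blast+
  have inv: "mmul x (minv x) = idm" "mmul (minv x) x = idm"
    "mmul y (minv y) = idm" "mmul (minv y) y = idm"
    using x y minv_GLinf by blast+
  have "mmul (mmul y x) (mmul (minv x) (minv y)) = mmul y (mmul (mmul x (minv x)) (minv y))"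
    by (simp only: mmul_assoc finitary_mmul fin)
  then have r: "mmul (mmul y x) (mmul (minv x) (minv y)) = idm"
    by (simp add: inv)
  have "mmul (mmul (minv x) (minv y)) (mmul y x) = mmul (minv x) (mmul (mmul (minv y) y) x)"
    by (simp only: mmul_assoc finitary_mmul fin)
  then have l: "mmul (mmul (minv x) (minv y)) (mmul y x) = idm"
    by (simp add: inv)
  show "mmul y x \<in> GLinf" "minv (mmul y x) = mmul (minv x) (minv y)"
    using GLinfI[OF _ _ r l] minv_eq[OF _ _ r l] fin finitary_mmul by auto
qed

lemma act_mmul:
  assumes x: "x \<in> GLinf" and y: "y \<in> GLinf" and W: "W \<subseteq> Finf" and V: "V \<subseteq> Finf"
    and g: "finitary g"
  shows "act (mmul y x) (W, g, V) = act y (act x (W, g, V))"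
proof -
  have fin: "finitary x" "finitary (minv x)" "finitary y" "finitary (minv y)"
    using x y minv_GLinf GLinf_finitary by blast+
  have "mvec (mtrans (minv (mmul y x))) ` W = mvec (mtrans (minv y)) ` mvec (mtrans (minv x)) ` W"
    unfolding image_image minv_mmul[OF x y]
    by (rule image_cong[OF refl]) (use W in \<open>auto simp: fin mtrans_mmul mvec_mmul finitary_mtrans\<close>)
  moreover have "mvec (mmul y x) ` V = mvec y ` mvec x ` V"
    unfolding image_image by (rule image_cong[OF refl]) (use V fin mvec_mmul in auto)
  moreover have "mmul (mmul (mmul y x) g) (minv (mmul y x))
      = mmul (mmul y (mmul (mmul x g) (minv x))) (minv y)"
    unfolding minv_mmul[OF x y] by (simp add: mmul_assoc finitary_mmul fin g)
  ultimately show ?thesis unfolding act_def by simp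
qed

lemma act_eq_self:
  assumes W: "W \<subseteq> Finf" and V: "V \<subseteq> Finf" and g: "finitary g"
    and z: "finitary z" and h: "finitary h" and zh: "mmul z h = idm" and hz: "mmul h z = idm"
    and zV: "mvec z ` V \<subseteq> V" and hV: "mvec h ` V \<subseteq> V"
    and zW: "mvec (mtrans z) ` W \<subseteq> W" and hW: "mvec (mtrans h) ` W \<subseteq> W"
    and zg: "mmul z g = mmul g z"
  shows "act z (W, g, V) = (W, g, V)"
proof -
  have "mvec (mtrans h) ` W = W"
  proof
    show "W \<subseteq> mvec (mtrans h) ` W"
    proof
      fix w assume w: "w \<in> W"
      have "mvec (mtrans h) (mvec (mtrans z) w) = mvec (mtrans (mmul z h)) w"
        using w W by (simp add: mvec_mmul finitary_mtrans mtrans_mmul z h subset_iff)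
      then have "mvec (mtrans h) (mvec (mtrans z) w) = w"
        using w W zh by (simp add: mvec_idm subset_iff)
      then show "w \<in> mvec (mtrans h) ` W" using zW w by (metis image_eqI image_subset_iff)
    qed
  qed (use hW in auto)
  moreover have "mvec z ` V = V"
  proof
    show "V \<subseteq> mvec z ` V"
    proof
      fix v assume v: "v \<in> V"
      have "mvec z (mvec h v) = v"
        using v V zh by (simp add: mvec_mmul[symmetric] z h mvec_idm subset_iff)
      then show "v \<in> mvec z ` V" using hV v by (metis image_eqI image_subset_iff)
    qed
  qed (use zV in auto)
  moreover have "mmul (mmul z g) h = g"
    unfolding zg by (simp add: mmul_assoc g z zh)
  ultimately show ?thesis unfolding act_def minv_eq[OF z h zh hz] by simp
qed

section \<open>Elementary matrices\<close>

definition col_shear :: "(nat \<Rightarrow> 'a::field) \<Rightarrow> nat \<Rightarrow> nat \<Rightarrow> nat \<Rightarrow> 'a" where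
  "col_shear u t = (\<lambda>i j. idm i j + (if j = t then u i else 0))"

definition row_shear :: "(nat \<Rightarrow> 'a::field) \<Rightarrow> nat \<Rightarrow> nat \<Rightarrow> nat \<Rightarrow> 'a" where
  "row_shear c t = (\<lambda>i j. idm i j + (if i = t then c j else 0))"

lemma mtrans_col_shear: "mtrans (col_shear u t) = row_shear u t"
  unfolding mtrans_def col_shear_def row_shear_def idm_def by (intro ext) auto

lemma mtrans_row_shear: "mtrans (row_shear u t) = col_shear u t"
  unfolding mtrans_def col_shear_def row_shear_def idm_def by (intro ext) auto

lemma id_beyond_col_shear: "(\<And>i. N \<le> i \<Longrightarrow> u i = 0) \<Longrightarrow> t < N \<Longrightarrow> id_beyond N (col_shear u t)"
  unfolding id_beyond_def col_shear_def by auto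

lemma finitary_col_shear: "u \<in> Finf \<Longrightarrow> finitary (col_shear u t)"
proof -
  assume "u \<in> Finf"
  then obtain N where "\<forall>i\<ge>N. u i = 0" using Finf_imp_vanishes_beyond by blast
  then have "id_beyond (max N (Suc t)) (col_shear u t)" by (intro id_beyond_col_shear) auto
  then show ?thesis by (rule id_beyond_imp_finitary)
qed

lemma finitary_row_shear: "u \<in> Finf \<Longrightarrow> finitary (row_shear u t)"
  using finitary_col_shear finitary_mtrans mtrans_col_shear by metis

lemma mmul_col_shear_left: "mmul (col_shear u t) B i j = B i j + u i * B t j"
proof -
  have "{k. col_shear u t i k \<noteq> 0} \<subseteq> {i, t}" by (auto simp: col_shear_def idm_def)
  then have "mmul (col_shear u t) B i j = (\<Sum>k\<in>{i, t}. col_shear u t i k * B k j)"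
    by (intro mmul_eq_sum) (auto intro: finite_subset)
  then show ?thesis by (cases "i = t") (auto simp: col_shear_def idm_def algebra_simps)
qed

lemma mmul_row_shear_right:
  assumes "finitary A"
  shows "mmul A (row_shear c t) i j = A i j + A i t * c j"
proof -
  let ?R = "{k. A i k \<noteq> 0}"
  have fR: "finite ?R" using finite_row_support[OF assms] .
  have "mmul A (row_shear c t) i j
      = (\<Sum>k\<in>?R. A i k * idm k j) + (\<Sum>k\<in>?R. if k = t then A i k * c j else 0)"
    unfolding mmul_def row_shear_def sum.distrib[symmetric]
    by (rule sum.cong) (auto simp: algebra_simps)
  also have "\<dots> = A i j + A i t * c j"
    using mmul_idm_right_apply[of A i j, OF fR] fR unfolding mmul_def by simp
  finally show ?thesis .
qed

lemma mmul_col_shear_right: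
  assumes "finitary A" "u \<in> Finf"
  shows "mmul A (col_shear u t) i j = A i j + (if j = t then mvec A u i else 0)"
proof -
  let ?R = "{k. A i k \<noteq> 0}"
  have fR: "finite ?R" using finite_row_support[OF assms(1)] .
  have "mmul A (col_shear u t) i j
      = (\<Sum>k\<in>?R. A i k * idm k j) + (if j = t then (\<Sum>k\<in>?R. A i k * u k) else 0)"
    unfolding mmul_def col_shear_def by (simp add: sum.distrib algebra_simps)
  also have "\<dots> = A i j + (if j = t then mvec A u i else 0)"
  proof -
    have "mvec A u i = (\<Sum>k\<in>?R. A i k * u k)"
      by (rule mvec_eq_sum) (use assms(2) fR in \<open>auto simp: Finf_def\<close>)
    then show ?thesis using mmul_idm_right_apply[of A i j, OF fR] unfolding mmul_def by simp
  qed
  finally show ?thesis .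
qed

lemma mmul_row_shear_left:
  assumes "finitary B" "c \<in> Finf"
  shows "mmul (row_shear c t) B i j = B i j + (if i = t then mvec (mtrans B) c j else 0)"
proof -
  have "mmul (row_shear c t) B i j = mmul (mtrans B) (col_shear c t) j i"
    using mtrans_mmul[OF finitary_row_shear[OF assms(2)] assms(1)]
    by (metis mtrans_def mtrans_row_shear)
  also have "\<dots> = B i j + (if i = t then mvec (mtrans B) c j else 0)"
    by (simp add: mmul_col_shear_right assms finitary_mtrans) (simp add: mtrans_def)
  finally show ?thesis .
qed

lemma mvec_col_shear:
  assumes "v \<in> Finf"
  shows "mvec (col_shear u t) v = (\<lambda>i. v i + v t * u i)"
proof (intro ext)
  fix i
  let ?J = "{k. v k \<noteq> 0}"
  have fJ: "finite ?J" using assms unfolding Finf_def by simp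
  have "mvec (col_shear u t) v i
      = (\<Sum>k\<in>?J. if k = i then v k else 0) + (\<Sum>k\<in>?J. if k = t then u i * v k else 0)"
    unfolding mvec_def col_shear_def sum.distrib[symmetric]
    by (rule sum.cong) (auto simp: idm_def algebra_simps)
  then show "mvec (col_shear u t) v i = v i + v t * u i"
    using fJ by (auto simp: mult.commute)
qed

lemma mvec_row_shear:
  assumes "v \<in> Finf"
  shows "mvec (row_shear c t) v = (\<lambda>i. v i + (\<Sum>k\<in>{k. v k \<noteq> 0}. c k * v k) * unit_vec t i)"
proof (intro ext)
  fix i
  let ?J = "{k. v k \<noteq> 0}"
  have fJ: "finite ?J" using assms unfolding Finf_def by simp
  have "mvec (row_shear c t) v i
      = (\<Sum>k\<in>?J. if k = i then v k else 0) + (\<Sum>k\<in>?J. if i = t then c k * v k else 0)"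
    unfolding mvec_def row_shear_def sum.distrib[symmetric]
    by (rule sum.cong) (auto simp: idm_def algebra_simps)
  then show "mvec (row_shear c t) v i = v i + (\<Sum>k\<in>?J. c k * v k) * unit_vec t i"
    using fJ by (auto simp: unit_vec_def)
qed

lemma subspace_add_scaled:
  assumes "is_subspace W" "v \<in> W" "w \<in> W"
  shows "(\<lambda>i. v i + c * w i) \<in> W"
  using assms unfolding is_subspace_def by simp

lemma mvec_col_shear_mem:
  assumes "is_subspace V" "u \<in> V" "v \<in> V"
  shows "mvec (col_shear u t) v \<in> V"
  using assms subspace_add_scaled[OF assms(1,3,2), of "v t"]
  by (simp add: mvec_col_shear is_subspace_def subset_iff mult.commute)

lemma mvec_row_shear_mem:
  assumes "is_subspace W" "unit_vec t \<in> W" "w \<in> W"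
  shows "mvec (row_shear c t) w \<in> W"
  using assms subspace_add_scaled[OF assms(1,3,2)]
  by (simp add: mvec_row_shear is_subspace_def subset_iff)

lemma col_shear_inverse:
  fixes u :: "nat \<Rightarrow> 'a::field"
  assumes "1 + u t \<noteq> 0"
  defines "u' \<equiv> \<lambda>i. - u i / (1 + u t)"
  shows "mmul (col_shear u t) (col_shear u' t) = idm"
    and "mmul (col_shear u' t) (col_shear u t) = idm"
proof -
  have "1 + u' t = 1 / (1 + u t)" "\<And>i. u' i + u i / (1 + u t) = 0"
    "\<And>i. u i + u' i * (1 + u t) = 0"
    using assms(1) by (simp_all add: u'_def field_simps)
  then show "mmul (col_shear u t) (col_shear u' t) = idm" "mmul (col_shear u' t) (col_shear u t) = idm"
    unfolding fun_eq_iff mmul_col_shear_left by (auto simp: col_shear_def idm_def)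
qed

lemma row_shear_inverse:
  assumes "c \<in> Finf" "c t = 0"
  shows "mmul (row_shear c t) (row_shear (\<lambda>j. - c j) t) = idm"
    and "mmul (row_shear (\<lambda>j. - c j) t) (row_shear c t) = idm"
proof -
  have "(\<lambda>j. - c j) \<in> Finf" using assms(1) by (simp add: Finf_def)
  then show "mmul (row_shear c t) (row_shear (\<lambda>j. - c j) t) = idm"
    and "mmul (row_shear (\<lambda>j. - c j) t) (row_shear c t) = idm"
    using assms unfolding fun_eq_iff
    by (simp_all add: mmul_row_shear_right finitary_row_shear) (auto simp: row_shear_def idm_def)
qed

lemma col_shear_commute:
  assumes "finitary g" "u \<in> Finf" "mvec g u = u" "\<And>j. g t j = idm t j"
  shows "mmul (col_shear u t) g = mmul g (col_shear u t)"
  using assms by (auto simp: fun_eq_iff mmul_col_shear_left mmul_col_shear_right idm_def)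

lemma row_shear_commute:
  assumes "finitary g" "c \<in> Finf" "mvec (mtrans g) c = c" "\<And>i. g i t = idm i t"
  shows "mmul (row_shear c t) g = mmul g (row_shear c t)"
  using assms by (auto simp: fun_eq_iff mmul_row_shear_left mmul_row_shear_right idm_def)

section \<open>Stabilisers of bounding triples\<close>

lemma
  assumes "(W, g, V) \<in> BT n"
  shows BT_subspaces: "is_subspace W" "is_subspace V"
    and BT_Finf: "W \<subseteq> Finf" "V \<subseteq> Finf"
    and BT_GLinf: "g \<in> GLinf"
    and BT_fixes: "\<And>v. v \<in> V \<Longrightarrow> mvec g v = v" "\<And>w. w \<in> W \<Longrightarrow> mvec (mtrans g) w = w"
    and BT_unit_vec: "\<And>t. n \<le> t \<Longrightarrow> unit_vec t \<in> V" "\<And>t. n \<le> t \<Longrightarrow> unit_vec t \<in> W"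
  using assms unfolding BT_def bounding_triple_def smooth_def is_subspace_def by auto

lemma BT_idm_col:
  assumes "(W, g, V) \<in> BT n" "n \<le> t"
  shows "g i t = idm i t"
proof -
  have "g i t = unit_vec t i"
    using BT_fixes(1)[OF assms(1) BT_unit_vec(1)[OF assms]] mvec_unit_vec by metis
  then show ?thesis by (simp add: unit_vec_def idm_def)
qed

lemma BT_idm_row:
  assumes "(W, g, V) \<in> BT n" "n \<le> t"
  shows "g t j = idm t j"
proof -
  have "mtrans g j t = unit_vec t j"
    using BT_fixes(2)[OF assms(1) BT_unit_vec(2)[OF assms]] mvec_unit_vec by metis
  then show ?thesis by (simp add: mtrans_def unit_vec_def idm_def)
qed

lemma col_shear_stabilises_BT:
  assumes T: "(W, g, V) \<in> BT n" and t: "n \<le> t" and u: "u \<in> V" and ut: "1 + u t \<noteq> 0"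
  shows "col_shear u t \<in> GLinf" "act (col_shear u t) (W, g, V) = (W, g, V)"
proof -
  define u' where "u' = (\<lambda>i. - u i / (1 + u t))"
  have u'V: "u' \<in> V"
    using subspace_add_scaled[OF BT_subspaces(2)[OF T] _ u, of "\<lambda>i. 0" "- 1 / (1 + u t)"]
      BT_subspaces(2)[OF T] by (simp add: u'_def is_subspace_def)
  have fin: "finitary (col_shear u t)" "finitary (col_shear u' t)"
    using u u'V BT_Finf(2)[OF T] by (auto intro: finitary_col_shear)
  note inv = col_shear_inverse[of u t, OF ut, folded u'_def]
  show "col_shear u t \<in> GLinf" using GLinfI[OF fin inv] .
  have "\<And>a. a \<in> V \<Longrightarrow> mvec (col_shear a t) ` V \<subseteq> V"
    using mvec_col_shear_mem[OF BT_subspaces(2)[OF T]] by blast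
  moreover have "\<And>a. mvec (mtrans (col_shear a t)) ` W \<subseteq> W"
    using mvec_row_shear_mem[OF BT_subspaces(1)[OF T] BT_unit_vec(2)[OF T t]]
    by (auto simp: mtrans_col_shear)
  moreover have "mmul (col_shear u t) g = mmul g (col_shear u t)"
    using col_shear_commute BT_GLinf[OF T] GLinf_finitary BT_Finf(2)[OF T] u BT_fixes(1)[OF T]
      BT_idm_row[OF T t] by blast
  ultimately show "act (col_shear u t) (W, g, V) = (W, g, V)"
    using act_eq_self[OF BT_Finf[OF T] GLinf_finitary[OF BT_GLinf[OF T]] fin inv] u u'V by blast
qed

lemma row_shear_stabilises_BT:
  assumes T: "(W, g, V) \<in> BT n" and t: "n \<le> t" and c: "c \<in> W" and ct: "c t = 0"
  shows "row_shear c t \<in> GLinf" "act (row_shear c t) (W, g, V) = (W, g, V)"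
proof -
  have c'W: "(\<lambda>j. - c j) \<in> W"
    using subspace_add_scaled[OF BT_subspaces(1)[OF T] _ c, of "\<lambda>i. 0" "- 1"]
      BT_subspaces(1)[OF T] by (simp add: is_subspace_def)
  have cF: "c \<in> Finf" using c BT_Finf(1)[OF T] by auto
  have fin: "finitary (row_shear c t)" "finitary (row_shear (\<lambda>j. - c j) t)"
    using c c'W BT_Finf(1)[OF T] by (auto intro: finitary_row_shear)
  note inv = row_shear_inverse[OF cF ct]
  show "row_shear c t \<in> GLinf" using GLinfI[OF fin inv] .
  have "\<And>a. mvec (row_shear a t) ` V \<subseteq> V"
    using mvec_row_shear_mem[OF BT_subspaces(2)[OF T] BT_unit_vec(1)[OF T t]] by blast
  moreover have "\<And>a. a \<in> W \<Longrightarrow> mvec (mtrans (row_shear a t)) ` W \<subseteq> W"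
    using mvec_col_shear_mem[OF BT_subspaces(1)[OF T]] by (auto simp: mtrans_row_shear)
  moreover have "mmul (row_shear c t) g = mmul g (row_shear c t)"
    using row_shear_commute BT_GLinf[OF T] GLinf_finitary cF BT_fixes(2)[OF T c]
      BT_idm_col[OF T t] by blast
  ultimately show "act (row_shear c t) (W, g, V) = (W, g, V)"
    using act_eq_self[OF BT_Finf[OF T] GLinf_finitary[OF BT_GLinf[OF T]] fin inv] c c'W by blast
qed

section \<open>Shrinking the conjugator\<close>

text \<open>If \<open>x\<^sub>t\<^sub>t = 0\<close>, correct by the preimage \<open>v\<close> of \<open>e\<^sub>t\<close> with its \<open>t\<close>-th entry removed;
  otherwise by a multiple of \<open>e\<^sub>t\<close>.\<close>

lemma pivot_correction_exists:
  assumes V: "is_subspace V" "unit_vec t \<in> V"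
    and v: "v \<in> V" "mvec x v = unit_vec t" "\<forall>i\<ge>Suc t. v i = 0"
  shows "\<exists>u\<in>V. (\<forall>i\<ge>Suc t. u i = 0) \<and> 1 + u t \<noteq> 0 \<and> x t t + mvec x u t = 1"
proof (cases "x t t = 0")
  case True
  define u where "u = (\<lambda>i. v i + (- v t) * unit_vec t i)"
  have "v \<in> Finf" using v(1) V(1) by (auto simp: is_subspace_def)
  then have "mvec x u t = mvec x v t + (- v t) * mvec x (unit_vec t) t"
    unfolding u_def by (rule mvec_add_scaled[OF _ unit_vec_Finf])
  then have "mvec x u t = 1"
    using v(2) True by (simp add: mvec_unit_vec) (simp add: unit_vec_def)
  moreover have "u \<in> V" unfolding u_def using subspace_add_scaled[OF V(1) v(1) V(2)] .
  moreover have "u t = 0" "\<forall>i\<ge>Suc t. u i = 0" using v(3) by (simp_all add: u_def unit_vec_def)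
  ultimately show ?thesis using True by auto
next
  case False
  define c where "c = 1 / x t t - 1"
  define u where "u = (\<lambda>i. c * unit_vec t i)"
  have "(\<lambda>i. 0) \<in> V" using V(1) by (simp add: is_subspace_def)
  then have "u \<in> V" using subspace_add_scaled[OF V(1) _ V(2), of "\<lambda>i. 0" c] by (simp add: u_def)
  moreover have "mvec x u t = c * x t t"
    unfolding u_def mvec_scale[OF unit_vec_Finf] mvec_unit_vec ..
  moreover have "u t = c" "\<forall>i\<ge>Suc t. u i = 0" by (simp_all add: u_def unit_vec_def)
  moreover have "1 + c \<noteq> 0" "x t t + c * x t t = 1" using False by (simp_all add: c_def field_simps)
  ultimately show ?thesis by auto
qed

lemma normalise_pivot:
  assumes T: "(W, g, V) \<in> BT n" and T': "(W', g', V') \<in> BT n" and t: "n \<le> t"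
    and x: "x \<in> GLinf" "id_beyond (Suc t) x" "act x (W, g, V) = (W', g', V')"
  shows "\<exists>x1\<in>GLinf. id_beyond (Suc t) x1 \<and> x1 t t = 1 \<and> act x1 (W, g, V) = (W', g', V')"
proof -
  have "mvec x ` V = V'" using x(3) by (simp add: act_def)
  then have "unit_vec t \<in> mvec x ` V" using BT_unit_vec(1)[OF T' t] by simp
  then obtain v where v: "v \<in> V" "mvec x v = unit_vec t" by (metis imageE)
  have "v \<in> Finf" using v(1) BT_Finf(2)[OF T] by auto
  have "\<forall>i\<ge>Suc t. v i = 0"
  proof (intro allI impI)
    fix i assume "Suc t \<le> i"
    then have "v i = mvec x v i"
      using mvec_id_beyond[OF x(2)] \<open>v \<in> Finf\<close> by (simp add: Finf_def)
    then show "v i = 0" using v(2) \<open>Suc t \<le> i\<close> by (simp add: unit_vec_def)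
  qed
  then obtain u where u: "u \<in> V" "\<forall>i\<ge>Suc t. u i = 0" "1 + u t \<noteq> 0" "x t t + mvec x u t = 1"
    using pivot_correction_exists[OF BT_subspaces(2)[OF T] BT_unit_vec(1)[OF T t] v] by blast
  note s = col_shear_stabilises_BT[OF T t u(1,3)]
  define x1 where "x1 = mmul x (col_shear u t)"
  have "x1 \<in> GLinf" unfolding x1_def using GLinf_mmul[OF s(1) x(1)] .
  moreover have "id_beyond (Suc t) x1"
    unfolding x1_def using id_beyond_mmul[OF x(2) id_beyond_col_shear] u(2) by auto
  moreover have "x1 t t = 1"
    using u(1,4) BT_Finf(2)[OF T] mmul_col_shear_right[OF GLinf_finitary[OF x(1)], of u t t t]
    by (auto simp: x1_def)
  moreover have "act x1 (W, g, V) = (W', g', V')"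
    unfolding x1_def act_mmul[OF s(1) x(1) BT_Finf[OF T] GLinf_finitary[OF BT_GLinf[OF T]]] s(2) x(3) ..
  ultimately show ?thesis by blast
qed

lemma id_beyond_clear_pivot:
  assumes x: "id_beyond (Suc t) x" "x t t = 1"
  shows "id_beyond t (mmul (mmul (col_shear (\<lambda>i. idm i t - x i t) t) x)
                           (row_shear (\<lambda>j. idm t j - x t j) t))" (is "id_beyond t ?y")
proof -
  define M where "M = mmul (col_shear (\<lambda>i. idm i t - x i t) t) x"
  have "id_beyond (Suc t) (col_shear (\<lambda>i. idm i t - x i t) t)"
    using x(1) by (intro id_beyond_col_shear) (auto simp: id_beyond_def)
  then have "finitary M"
    unfolding M_def using id_beyond_mmul[OF _ x(1)] id_beyond_imp_finitary by blast
  have M: "M i j = x i j + (idm i t - x i t) * x t j" for i j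
    unfolding M_def mmul_col_shear_left ..
  have y: "?y i j = M i j + idm i t * (idm t j - x t j)" for i j
    using M[of i t] x(2) unfolding M_def[symmetric] mmul_row_shear_right[OF \<open>finitary M\<close>] by simp
  have xo: "x i j = idm i j" if "t < i \<or> t < j" for i j
    using x(1) that unfolding id_beyond_def by auto
  show ?thesis
    unfolding id_beyond_def
  proof (intro allI impI)
    fix i j assume "t \<le> i \<or> t \<le> j"
    then consider "i = t" | "t < i" | "i < t" "j = t" | "i < t" "t < j" by linarith
    then show "?y i j = idm i j"
    proof cases
      case 1
      then show ?thesis unfolding y M by (simp add: x(2) idm_def)
    next
      case 2
      then have "x i t = 0" "x i j = idm i j" using xo[of i t] xo[of i j] by (auto simp: idm_def)
      then show ?thesis using 2 unfolding y M by (simp add: idm_def)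
    next
      case 3
      then show ?thesis unfolding y M by (simp add: x(2) idm_def)
    next
      case 4
      then have "x t j = 0" "x i j = 0" using xo[of t j] xo[of i j] by (auto simp: idm_def)
      then show ?thesis using 4 unfolding y M by (simp add: idm_def)
    qed
  qed
qed

lemma clear_pivot:
  assumes T: "(W, g, V) \<in> BT n" and T': "(W', g', V') \<in> BT n" and t: "n \<le> t"
    and x: "x \<in> GLinf" "id_beyond (Suc t) x" "x t t = 1" "act x (W, g, V) = (W', g', V')"
  shows "\<exists>y\<in>GLinf. id_beyond t y \<and> act y (W, g, V) = (W', g', V')"
proof -
  define b where "b = (\<lambda>i. idm i t - x i t)"
  define c where "c = (\<lambda>j. idm t j - x t j)"
  have fin: "finitary x" "finitary (minv x)" "mmul (minv x) x = idm"
    using x(1) minv_GLinf GLinf_finitary by blast+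
  have V': "mvec x ` V = V'" and W': "mvec (mtrans (minv x)) ` W = W'"
    using x(4) by (simp_all add: act_def)
  have "mvec x (unit_vec t) \<in> V'"
    using V' BT_unit_vec(1)[OF T t] by blast
  then have "(\<lambda>i. unit_vec t i + (- 1) * mvec x (unit_vec t) i) \<in> V'"
    by (rule subspace_add_scaled[OF BT_subspaces(2)[OF T'] BT_unit_vec(1)[OF T' t]])
  then have "(\<lambda>i. unit_vec t i + (- 1) * x i t) \<in> V'" by (simp only: mvec_unit_vec)
  then have b: "b \<in> V'" "b t = 0"
    using x(3) by (simp_all add: b_def unit_vec_def idm_def)
  have "unit_vec t \<in> mvec (mtrans (minv x)) ` W"
    using W' BT_unit_vec(2)[OF T' t] by simp
  then obtain w where w: "w \<in> W" "mvec (mtrans (minv x)) w = unit_vec t"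
    by (metis imageE)
  have "w \<in> Finf" using w(1) BT_Finf(1)[OF T] by auto
  then have "mvec (mtrans x) (unit_vec t) = w"
    using w(2)[symmetric] fin
    by (simp add: mvec_mmul[symmetric] finitary_mtrans mtrans_mmul[symmetric] mvec_idm)
  then have "w j = x t j" for j
    using mvec_unit_vec[of "mtrans x" t j] by (simp add: mtrans_def)
  moreover have "(\<lambda>j. unit_vec t j + (- 1) * w j) \<in> W"
    using subspace_add_scaled[OF BT_subspaces(1)[OF T] BT_unit_vec(2)[OF T t] w(1)] .
  ultimately have c: "c \<in> W" "c t = 0"
    using x(3) by (simp_all add: c_def unit_vec_def idm_def eq_commute[of _ t])
  have "1 + b t \<noteq> 0" using b(2) by simp
  note L = col_shear_stabilises_BT[OF T' t b(1) this] and R = row_shear_stabilises_BT[OF T t c]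
  define y where "y = mmul (mmul (col_shear b t) x) (row_shear c t)"
  have "y \<in> GLinf" unfolding y_def using GLinf_mmul[OF x(1) L(1)] GLinf_mmul[OF R(1)] by blast
  moreover have "id_beyond t y"
    unfolding y_def b_def c_def using id_beyond_clear_pivot[OF x(2,3)] .
  moreover have "act y (W, g, V) = (W', g', V')"
  proof -
    have fin_g: "finitary g" using GLinf_finitary[OF BT_GLinf[OF T]] .
    have "act y (W, g, V) = act (mmul (col_shear b t) x) (act (row_shear c t) (W, g, V))"
      unfolding y_def using act_mmul[OF R(1) GLinf_mmul[OF x(1) L(1)] BT_Finf[OF T] fin_g] .
    also have "\<dots> = act (col_shear b t) (act x (W, g, V))"
      unfolding R(2) using act_mmul[OF x(1) L(1) BT_Finf[OF T] fin_g] .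
    finally show ?thesis unfolding x(4) L(2) .
  qed
  ultimately show ?thesis by blast
qed

lemma shrink_conjugator:
  assumes T: "(W, g, V) \<in> BT n" and T': "(W', g', V') \<in> BT n" and t: "n \<le> t"
    and x: "x \<in> GLinf" "id_beyond (Suc t) x" "act x (W, g, V) = (W', g', V')"
  shows "\<exists>y\<in>GLinf. id_beyond t y \<and> act y (W, g, V) = (W', g', V')"
  using normalise_pivot[OF assms] clear_pivot[OF T T' t] by blast

lemma conjugator_in_GLn:
  assumes T: "(W, g, V) \<in> BT n" and T': "(W', g', V') \<in> BT n"
    and x: "x \<in> GLinf" "id_beyond N x" "act x (W, g, V) = (W', g', V')"
  shows "\<exists>y\<in>GLn n. act y (W, g, V) = (W', g', V')"
  using x
proof (induction N arbitrary: x)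
  case 0
  then show ?case unfolding GLn_eq using id_beyond_mono[of 0 x n] by blast
next
  case (Suc t)
  show ?case
  proof (cases "n \<le> t")
    case True
    then obtain y where "y \<in> GLinf" "id_beyond t y" "act y (W, g, V) = (W', g', V')"
      using shrink_conjugator[OF T T' True Suc.prems] by blast
    then show ?thesis using Suc.IH by blast
  next
    case False
    then show ?thesis unfolding GLn_eq using Suc.prems id_beyond_mono[of "Suc t" x n] by auto
  qed
qed

theorem proposition4p11:
  fixes n :: nat and T T' :: "'a::{field, finite} triple"
  assumes "T \<in> BT n" and "T' \<in> BT n"
    and "\<exists>x\<in>GLinf. act x T = T'"
  shows "\<exists>x\<in>GLn n. act x T = T'"
proof -
  obtain W g V W' g' V' where eqs: "T = (W, g, V)" "T' = (W', g', V')" by (cases T, cases T') auto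
  obtain x where x: "x \<in> GLinf" "act x T = T'" using assms(3) by blast
  obtain N where "id_beyond N x" using finitary_imp_id_beyond GLinf_finitary[OF x(1)] by blast
  then show ?thesis
    using conjugator_in_GLn[of W g V n W' g' V' x N] assms(1,2) x unfolding eqs by blast
qed

end
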